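(* Let $G$ be a finite graph with $\chi_c(G)=\frac{n}{d}$ where $\gcd(n,d)=1$. If $d\ge 2$ (equivalently, $\chi_c(G)\neq\chi(G)$), then $\phi(G)\le \left\lceil \chi_c(G)\left(1+\frac{1}{d-1}\right)\right\rceil\le 2\chi(G)-1$.
   Context: For integers $n\ge 2d\ge 2$, the circular complete graph $K_{n/d}$ has vertex set $\{0,1,\dots,n-1\}$, with $i$ adjacent to $j$ iff $d\le |i-j|\le n-d$. The circular chromatic number $\chi_c(G)$ is the minimum of $n/d$ (with $\gcd(n,d)=1$) such that $G$ admits a homomorphism to $K_{n/d}$; $\chi(G)$ is the chromatic number. An independent set of $G$ is a free independent set if it is contained in at least two distinct maximal independent sets of $G$. The free chromatic number $\phi(G)$ is the minimum positive integer $t$ such that $V(G)$ can be partitioned into $t$ free independent sets of $G$ ($\phi(G)=\infty$ if no such partition exists). *)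

theory Defs
  imports Complex_Main "HOL-Library.Extended_Nat" "HOL-Library.Disjoint_Sets"
begin

definition fin_graph :: "'a set \<Rightarrow> ('a \<Rightarrow> 'a \<Rightarrow> bool) \<Rightarrow> bool" where
  "fin_graph V E \<longleftrightarrow> finite V \<and> (\<forall>u v. E u v \<longrightarrow> u \<in> V \<and> v \<in> V \<and> u \<noteq> v \<and> E v u)"

text \<open>Homomorphism into the circular complete graph K_{n/d} on {0..n-1}:
  i adjacent to j iff d \<le> |i-j| \<le> n-d.\<close>
definition circ_hom :: "'a set \<Rightarrow> ('a \<Rightarrow> 'a \<Rightarrow> bool) \<Rightarrow> nat \<Rightarrow> nat \<Rightarrow> ('a \<Rightarrow> nat) \<Rightarrow> bool" where
  "circ_hom V E n d f \<longleftrightarrow> (\<forall>v\<in>V. f v < n) \<and>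
     (\<forall>u v. E u v \<longrightarrow> int d \<le> \<bar>int (f u) - int (f v)\<bar> \<and> \<bar>int (f u) - int (f v)\<bar> \<le> int n - int d)"

definition circular_chromatic_number :: "'a set \<Rightarrow> ('a \<Rightarrow> 'a \<Rightarrow> bool) \<Rightarrow> real" where
  "circular_chromatic_number V E =
     Inf {real n / real d | n d. 1 \<le> d \<and> 2 * d \<le> n \<and> coprime n d \<and> (\<exists>f. circ_hom V E n d f)}"

definition proper_coloring :: "'a set \<Rightarrow> ('a \<Rightarrow> 'a \<Rightarrow> bool) \<Rightarrow> nat \<Rightarrow> ('a \<Rightarrow> nat) \<Rightarrow> bool" where
  "proper_coloring V E k c \<longleftrightarrow> (\<forall>v\<in>V. c v < k) \<and> (\<forall>u v. E u v \<longrightarrow> c u \<noteq> c v)"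

definition chromatic_number :: "'a set \<Rightarrow> ('a \<Rightarrow> 'a \<Rightarrow> bool) \<Rightarrow> nat" where
  "chromatic_number V E = (LEAST k. \<exists>c. proper_coloring V E k c)"

definition independent_set :: "'a set \<Rightarrow> ('a \<Rightarrow> 'a \<Rightarrow> bool) \<Rightarrow> 'a set \<Rightarrow> bool" where
  "independent_set V E S \<longleftrightarrow> S \<subseteq> V \<and> (\<forall>u\<in>S. \<forall>v\<in>S. \<not> E u v)"

definition maximal_independent_set :: "'a set \<Rightarrow> ('a \<Rightarrow> 'a \<Rightarrow> bool) \<Rightarrow> 'a set \<Rightarrow> bool" where
  "maximal_independent_set V E S \<longleftrightarrow> independent_set V E S \<and>
     (\<forall>T. independent_set V E T \<and> S \<subseteq> T \<longrightarrow> T = S)"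

definition free_independent_set :: "'a set \<Rightarrow> ('a \<Rightarrow> 'a \<Rightarrow> bool) \<Rightarrow> 'a set \<Rightarrow> bool" where
  "free_independent_set V E S \<longleftrightarrow> independent_set V E S \<and>
     (\<exists>M1 M2. M1 \<noteq> M2 \<and> maximal_independent_set V E M1 \<and> maximal_independent_set V E M2
        \<and> S \<subseteq> M1 \<and> S \<subseteq> M2)"

text \<open>Free chromatic number: least positive t such that V is partitioned into t free
  independent sets; \<infinity> if none (Inf of the empty set of enat is \<infinity>).\<close>
definition free_chromatic_number :: "'a set \<Rightarrow> ('a \<Rightarrow> 'a \<Rightarrow> bool) \<Rightarrow> enat" where
  "free_chromatic_number V E =
     Inf {enat (card P) | P. partition_on V P \<and> finite P \<and> 0 < card P \<and>
                            (\<forall>S\<in>P. free_independent_set V E S)}"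

end

theory Submission
  imports Defs
begin

text \<open>Fix a homomorphism \<open>f\<close> into \<open>K(n/d)\<close> realising \<open>\<chi>\<^sub>c(G) = n/d\<close>. It is tight: every
  colour \<open>i\<close> has an edge to colour \<open>i + d\<close>, for otherwise recolouring \<open>i\<close> as \<open>i + 1\<close> leaves
  colour \<open>i\<close> unused, and a homomorphism missing a colour can be pushed by the Bondy--Hell map into
  \<open>K(p'/q')\<close> for the left Farey neighbour \<open>p'/q'\<close> of \<open>n/d\<close>, contradicting minimality.
  A window of \<open>d - 1\<close> consecutive colours starting at \<open>a\<close> is then independent, and the tight edge
  from colour \<open>a - 1\<close> to \<open>a - 1 + d\<close> has both ends non-adjacent to the window, so each end extends
  it to a different maximal independent set. Cutting the \<open>n\<close> colours into
  \<open>\<lceil>n/(d - 1)\<rceil>\<close> windows gives the first bound; the second follows from \<open>n < d \<chi>(G)\<close>,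
  since \<open>(2\<chi> - 1)(d - 1) - (d\<chi> - 1) = (\<chi> - 1)(d - 2) \<ge> 0\<close>.\<close>

definition circ_adj :: "nat \<Rightarrow> nat \<Rightarrow> nat \<Rightarrow> nat \<Rightarrow> bool" where
  "circ_adj n d x y \<longleftrightarrow> int d \<le> \<bar>int x - int y\<bar> \<and> \<bar>int x - int y\<bar> \<le> int n - int d"

lemma circ_hom_iff_circ_adj:
  "circ_hom V E n d f \<longleftrightarrow> (\<forall>v\<in>V. f v < n) \<and> (\<forall>u v. E u v \<longrightarrow> circ_adj n d (f u) (f v))"
  by (simp add: circ_hom_def circ_adj_def)

lemma circ_adj_sym: "circ_adj n d x y \<longleftrightarrow> circ_adj n d y x"
  by (auto simp: circ_adj_def abs_minus_commute)

lemma circ_adj_imp_neq: "circ_adj n d x y \<Longrightarrow> 0 < d \<Longrightarrow> x \<noteq> y"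
  by (auto simp: circ_adj_def)

lemma circ_adj_iff_mod:
  assumes "x < n" "y < n"
  shows "circ_adj n d x y \<longleftrightarrow>
    int d \<le> (int x - int y) mod int n \<and> (int x - int y) mod int n \<le> int n - int d"
proof (cases "y \<le> x")
  case True
  then have "(int x - int y) mod int n = int x - int y"
    using assms by (intro mod_pos_pos_trivial) auto
  then show ?thesis using True by (simp add: circ_adj_def)
next
  case False
  have "(int x - int y) mod int n = (int x - int y + int n) mod int n" by simp
  also have "\<dots> = int x - int y + int n"
    using False assms by (intro mod_pos_pos_trivial) auto
  finally show ?thesis using False by (auto simp: circ_adj_def)
qed

lemma circ_adj_rotate:
  assumes "x < n" "y < n" "circ_adj n d x y"
  shows "circ_adj n d ((x + s) mod n) ((y + s) mod n)"
proof -
  have "(int ((x + s) mod n) - int ((y + s) mod n)) mod int n = (int (x + s) - int (y + s)) mod int n"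
    by (simp add: of_nat_mod mod_diff_eq)
  then show ?thesis using assms by (simp add: circ_adj_iff_mod)
qed

lemma circ_adj_shift:
  assumes "x < n" "y < n" "0 < d" "circ_adj n d x y" "y \<noteq> (x + d) mod n"
  shows "circ_adj n d ((x + 1) mod n) y"
proof -
  define D where "D = (int y - int x) mod int n"
  have "circ_adj n d y x" using assms circ_adj_sym by blast
  then have D: "int d \<le> D" "D \<le> int n - int d"
    using assms(1,2) unfolding D_def by (simp_all add: circ_adj_iff_mod)
  have "D \<noteq> int d"
  proof
    assume "D = int d"
    have "int y = ((int y - int x) + int x) mod int n" using assms(2) by simp
    also have "\<dots> = (D + int x) mod int n" unfolding D_def by (simp add: mod_add_left_eq)
    also have "\<dots> = int ((x + d) mod n)" using \<open>D = int d\<close> by (simp add: of_nat_mod add.commute)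
    finally show False using assms(5) by simp
  qed
  have "(int y - int ((x + 1) mod n)) mod int n = (int y - (int x + 1)) mod int n"
    by (simp add: of_nat_mod mod_diff_right_eq add.commute)
  also have "\<dots> = ((int y - int x) - 1) mod int n" by (simp add: algebra_simps)
  also have "\<dots> = (D - 1) mod int n" unfolding D_def by (simp add: mod_diff_left_eq)
  also have "\<dots> = D - 1" using D \<open>D \<noteq> int d\<close> by (intro mod_pos_pos_trivial) auto
  finally have "circ_adj n d y ((x + 1) mod n)"
    using D \<open>D \<noteq> int d\<close> assms(1,2) by (simp add: circ_adj_iff_mod)
  then show ?thesis using circ_adj_sym by blast
qed

section \<open>The Bondy--Hell map\<close>

lemma zdiv_add_mult_le:
  fixes a b k q :: int
  assumes "0 < q" "b + k * q \<le> a"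
  shows "b div q + k \<le> a div q"
  using zdiv_mono1[OF assms(2) assms(1)] assms(1) by simp

lemma zdiv_diff1_eq:
  fixes a q :: int
  assumes "0 < q" "\<not> q dvd a"
  shows "(a - 1) div q = a div q"
proof -
  have "a mod q \<noteq> 0" "0 \<le> a mod q" using assms by (simp_all add: dvd_eq_mod_eq_0)
  then have "1 \<le> a mod q" by linarith
  then have "q * (a div q) \<le> a - 1" using mult_div_mod_eq[of q a] by linarith
  then have "a div q \<le> (a - 1) div q" using zdiv_mono1[OF _ assms(1)] assms(1) by fastforce
  moreover have "(a - 1) div q \<le> a div q" using zdiv_mono1 assms(1) by simp
  ultimately show ?thesis by simp
qed

lemma unimodular_not_dvd:
  fixes P Q P' Q' Z :: int
  assumes "P * Q' - P' * Q = 1" "0 < P - Z" "P - Z < Q"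
  shows "\<not> Q dvd Z * Q' - 1"
proof
  assume "Q dvd Z * Q' - 1"
  moreover have "(Z - P) * Q' = (Z * Q' - 1) - P' * Q" using assms(1) by (simp add: algebra_simps)
  ultimately have "Q dvd (Z - P) * Q'" by (metis dvd_diff dvd_triv_right)
  moreover have "coprime Q Q'"
  proof (rule coprimeI)
    fix c assume "c dvd Q" "c dvd Q'"
    then have "c dvd P * Q' - P' * Q" by simp
    then show "is_unit c" using assms(1) by simp
  qed
  ultimately have "Q dvd P - Z" using coprime_dvd_mult_left_iff dvd_minus_iff minus_diff_eq by metis
  then show False using assms(2,3) zdvd_imp_le by fastforce
qed

lemma bondy_hell_gap:
  fixes P Q P' Q' X Y :: int
  assumes Q: "0 < Q" "0 < Q'" and det: "P * Q' - P' * Q = 1"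
    and XY: "0 \<le> X" "Y \<le> P - 2" "Q \<le> Y - X" "Y - X \<le> P - Q"
  shows "Q' \<le> ((Y + 1) * Q' - 1) div Q - ((X + 1) * Q' - 1) div Q"
    and "((Y + 1) * Q' - 1) div Q - ((X + 1) * Q' - 1) div Q \<le> P' - Q'"
proof -
  have "(X + 1 + Q) * Q' \<le> (Y + 1) * Q'" using XY Q by (intro mult_right_mono) auto
  then have "((X + 1) * Q' - 1) + Q' * Q \<le> (Y + 1) * Q' - 1" by (simp add: algebra_simps)
  from zdiv_add_mult_le[OF Q(1) this]
  show "Q' \<le> ((Y + 1) * Q' - 1) div Q - ((X + 1) * Q' - 1) div Q" by simp
next
  define M where "M = (Y + 1 + Q) * Q' - 1"
  have X_shift: "((X + 1) * Q' - 1) div Q + P' = ((X + 1 + P) * Q' - 2) div Q"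
  proof -
    have "(X + 1 + P) * Q' - 2 = ((X + 1) * Q' - 1) + P' * Q" using det by (simp add: algebra_simps)
    moreover have "(((X + 1) * Q' - 1) + P' * Q) div Q = ((X + 1) * Q' - 1) div Q + P'" using Q by simp
    ultimately show ?thesis by (simp only:)
  qed
  have Y_shift: "((Y + 1) * Q' - 1) div Q + Q' = M div Q"
  proof -
    have "M = ((Y + 1) * Q' - 1) + Q' * Q" unfolding M_def by (simp add: algebra_simps)
    moreover have "(((Y + 1) * Q' - 1) + Q' * Q) div Q = ((Y + 1) * Q' - 1) div Q + Q'" using Q by simp
    ultimately show ?thesis by (simp only:)
  qed
  have "M div Q \<le> ((X + 1 + P) * Q' - 2) div Q"
  proof (cases "Y + Q < X + P")
    case True
    then have "(Y + 2 + Q) * Q' \<le> (X + 1 + P) * Q'" using Q by (intro mult_right_mono) auto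
    then have "M \<le> (X + 1 + P) * Q' - 2" unfolding M_def using Q by (simp add: algebra_simps)
    then show ?thesis using Q by (intro zdiv_mono1) auto
  next
    case False
    then have "Y + Q = X + P" using XY by simp
    then have "M - 1 = (X + 1 + P) * Q' - 2" unfolding M_def by (simp add: algebra_simps)
    moreover have "\<not> Q dvd M"
    proof
      assume "Q dvd M"
      then have "Q dvd (Y + 1) * Q' - 1"
        unfolding M_def by (metis dvd_add_times_triv_right_iff diff_add_eq
            distrib_right mult.commute)
      moreover have "\<not> Q dvd (Y + 1) * Q' - 1"
        using \<open>Y + Q = X + P\<close> XY by (intro unimodular_not_dvd[OF det]) auto
      ultimately show False by contradiction
    qed
    ultimately have "M div Q = ((X + 1 + P) * Q' - 2) div Q" using zdiv_diff1_eq[OF Q(1)] by metis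
    then show ?thesis by simp
  qed
  then show "((Y + 1) * Q' - 1) div Q - ((X + 1) * Q' - 1) div Q \<le> P' - Q'"
    using X_shift Y_shift by linarith
qed

text \<open>For \<open>p q' - p' q = 1\<close>, the map \<open>x \<mapsto> \<lfloor>((x + 1) q' - 1) / q\<rfloor>\<close> sends \<open>K(p/q)\<close> with the
  colour \<open>p - 1\<close> deleted homomorphically into \<open>K(p'/q')\<close>.\<close>
definition bondy_hell :: "nat \<Rightarrow> nat \<Rightarrow> nat \<Rightarrow> nat" where
  "bondy_hell q q' x = nat (((int x + 1) * int q' - 1) div int q)"

lemma int_bondy_hell:
  assumes "0 < q'"
  shows "int (bondy_hell q q' x) = ((int x + 1) * int q' - 1) div int q"
proof -
  have "(int x + 1) * int q' - 1 = int q' * int x + (int q' - 1)" by (simp add: algebra_simps)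
  then have "0 \<le> (int x + 1) * int q' - 1" using assms by (simp add: add_nonneg_pos)
  then show ?thesis unfolding bondy_hell_def by (simp add: div_int_pos_iff)
qed

lemma zdiv_less_if_less_mult:
  fixes a b c :: int
  assumes "a < b * c" "0 < c"
  shows "a div c < b"
proof (rule ccontr)
  assume "\<not> a div c < b"
  then have "c * b \<le> c * (a div c)" using assms(2) by (intro mult_left_mono) auto
  moreover have "0 \<le> a mod c" using assms(2) by simp
  ultimately show False using mult_div_mod_eq[of c a] assms(1) by (simp add: mult.commute)
qed

lemma bondy_hell_less:
  assumes "0 < q" "0 < q'" "p * q' = p' * q + 1" "x + 2 \<le> p"
  shows "bondy_hell q q' x < p'"
proof -
  have "(int x + 1) * int q' \<le> (int p - 1) * int q'" using assms by (intro mult_right_mono) auto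
  moreover have "int p * int q' = int p' * int q + 1" using assms(3) by (metis of_nat_mult of_nat_add of_nat_1)
  ultimately have "(int x + 1) * int q' - 1 < int p' * int q" using assms by (simp add: algebra_simps)
  then have "((int x + 1) * int q' - 1) div int q < int p'" using assms(1) by (intro zdiv_less_if_less_mult) auto
  then have "int (bondy_hell q q' x) < int p'" using int_bondy_hell[OF assms(2)] by simp
  then show ?thesis by simp
qed

lemma bondy_hell_circ_adj:
  assumes q: "0 < q" "0 < q'" and det: "p * q' = p' * q + 1"
    and xy: "x + 2 \<le> p" "y + 2 \<le> p" and adj: "circ_adj p q x y"
  shows "circ_adj p' q' (bondy_hell q q' x) (bondy_hell q q' y)"
proof -
  have det': "int p * int q' - int p' * int q = 1"
    using det by (metis add_diff_cancel_left' of_nat_add of_nat_mult of_nat_1)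
  have less: "circ_adj p' q' (bondy_hell q q' x) (bondy_hell q q' y)"
    if "x < y" "x + 2 \<le> p" "y + 2 \<le> p" "circ_adj p q x y" for x y
  proof -
    have XY: "int q \<le> int y - int x" "int y - int x \<le> int p - int q"
      using that unfolding circ_adj_def by auto
    have "int q' \<le> int (bondy_hell q q' y) - int (bondy_hell q q' x)"
      "int (bondy_hell q q' y) - int (bondy_hell q q' x) \<le> int p' - int q'"
      using bondy_hell_gap[OF _ _ det' _ _ XY] q that by (simp_all add: int_bondy_hell)
    then show ?thesis unfolding circ_adj_def by arith
  qed
  have "x \<noteq> y" using adj q circ_adj_imp_neq by blast
  then consider "x < y" | "y < x" by linarith
  then show ?thesis
  proof cases
    case 1
    then show ?thesis using less xy adj by blast
  next
    case 2
    then show ?thesis using less[of y x] xy adj circ_adj_sym by blast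
  qed
qed

lemma farey_left_neighbour:
  fixes p q :: nat
  assumes "coprime p q" "0 < p" "0 < q"
  shows "\<exists>p' q'. 0 < q' \<and> q' \<le> q \<and> p * q' = p' * q + 1"
proof (cases "q = 1")
  case True
  then show ?thesis using assms(2) by (intro exI[of _ "p - 1"] exI[of _ 1]) auto
next
  case False
  then have "1 < q" using assms(3) by simp
  obtain x y where "p * x = q * y + 1"
    using bezout_nat[of p q] assms by (auto simp: coprime_iff_gcd_eq_1)
  then have "p * x mod q = (1 + q * y) mod q" by simp
  also have "\<dots> = 1" using \<open>1 < q\<close> by (simp only: mod_mult_self2) simp
  finally have "p * x mod q = 1" .
  then have r: "p * (x mod q) mod q = 1" by (simp add: mod_mult_right_eq)
  then have "p * (x mod q) = p * (x mod q) div q * q + 1"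
    using div_mult_mod_eq[of "p * (x mod q)" q] by simp
  moreover have "x mod q \<noteq> 0" using r by (intro notI) simp
  moreover have "x mod q \<le> q" using assms(3) by (simp add: less_imp_le)
  ultimately show ?thesis by blast
qed

section \<open>Attaining the circular chromatic number\<close>

definition circ_colourable :: "'a set \<Rightarrow> ('a \<Rightarrow> 'a \<Rightarrow> bool) \<Rightarrow> nat \<Rightarrow> nat \<Rightarrow> bool" where
  "circ_colourable V E n d \<longleftrightarrow> 1 \<le> d \<and> 2 * d \<le> n \<and> coprime n d \<and> (\<exists>f. circ_hom V E n d f)"

lemma circular_chromatic_number_eq_Inf:
  "circular_chromatic_number V E = Inf {real n / real d | n d. circ_colourable V E n d}"
  unfolding circular_chromatic_number_def circ_colourable_def by simp

lemma circular_chromatic_number_le: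
  assumes "circ_colourable V E n d"
  shows "circular_chromatic_number V E \<le> real n / real d"
  unfolding circular_chromatic_number_eq_Inf
  using assms by (intro cInf_lower bdd_belowI[of _ 0]) auto

lemma mod_add_right_cancel_less:
  fixes a b s p :: nat
  assumes "a < p" "b < p" "(a + s) mod p = (b + s) mod p"
  shows "a = b"
proof -
  have "(int a + int s) mod int p = (int b + int s) mod int p"
    using assms(3) by (metis of_nat_add of_nat_mod)
  then have "((int a + int s) mod int p - int s) mod int p = ((int b + int s) mod int p - int s) mod int p"
    by simp
  then have "int a mod int p = int b mod int p" by (simp add: mod_diff_left_eq)
  then show ?thesis using assms(1,2) by simp
qed

text \<open>Rotate the missing colour to \<open>p - 1\<close>, then apply the Bondy--Hell map.\<close>
lemma circ_hom_missing_colour_reduce: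
  assumes G: "fin_graph V E" and f: "circ_hom V E p q f" and q: "1 \<le> q" "2 * q < p"
    and cop: "coprime p q" and c: "c < p" "c \<notin> f ` V"
  shows "\<exists>p' q'. circ_colourable V E p' q' \<and> p' < p \<and> real p' / real q' < real p / real q"
proof -
  obtain p' q' where q': "0 < q'" "q' \<le> q" and det: "p * q' = p' * q + 1"
    using farey_left_neighbour[OF cop] q by auto
  define r where "r v = (f v + (p - 1 - c)) mod p" for v
  have r_le: "r v + 2 \<le> p" if "v \<in> V" for v
  proof -
    have fv: "f v < p" "f v \<noteq> c" using f that c unfolding circ_hom_def by auto
    have "(c + (p - 1 - c)) mod p = p - 1" using c by simp
    then have "r v \<noteq> p - 1"
      unfolding r_def using mod_add_right_cancel_less[OF fv(1) c(1)] fv(2) by metis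
    moreover have "r v < p" unfolding r_def using q by simp
    ultimately show ?thesis by linarith
  qed
  have "circ_hom V E p' q' (\<lambda>v. bondy_hell q q' (r v))"
    unfolding circ_hom_iff_circ_adj
  proof (intro conjI ballI allI impI)
    fix v assume "v \<in> V"
    then show "bondy_hell q q' (r v) < p'" using bondy_hell_less[OF _ q'(1) det r_le] q by simp
  next
    fix u v assume uv: "E u v"
    then have V: "u \<in> V" "v \<in> V" using G unfolding fin_graph_def by auto
    then have "f u < p" "f v < p" using f unfolding circ_hom_def by auto
    moreover have "circ_adj p q (f u) (f v)" using f uv unfolding circ_hom_iff_circ_adj by blast
    ultimately have "circ_adj p q (r u) (r v)" unfolding r_def by (rule circ_adj_rotate)
    then show "circ_adj p' q' (bondy_hell q q' (r u)) (bondy_hell q q' (r v))"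
      using bondy_hell_circ_adj[OF _ q'(1) det] q r_le V by simp
  qed
  moreover have "real p' / real q' < real p / real q"
  proof -
    have "real p' * real q < real p * real q'" using det by (metis less_add_one of_nat_less_iff of_nat_mult)
    then show ?thesis using q q'(1) by (simp add: divide_simps)
  qed
  moreover have "p' < p"
  proof -
    have "p' * q < p * q" using det mult_le_mono2[OF q'(2), of p] by linarith
    then show ?thesis by simp
  qed
  moreover have "2 * q' \<le> p'"
  proof -
    have "(2 * q + 1) * q' \<le> p * q'" using q by (intro mult_right_mono) auto
    then have "2 * q' * q + q' \<le> p' * q + 1" using det by (simp add: algebra_simps)
    then have "2 * q' * q \<le> p' * q" using q'(1) by linarith
    then show ?thesis using q by simp
  qed
  moreover have "coprime p' q'"
  proof (rule coprimeI)
    fix e assume "e dvd p'" "e dvd q'"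
    then have "e dvd p * q' - p' * q" by (intro dvd_diff_nat) auto
    then show "is_unit e" using det by simp
  qed
  ultimately show ?thesis using q'(1) unfolding circ_colourable_def
    by (intro exI[of _ p'] exI[of _ q']) auto
qed

lemma proper_coloring_if_card_le:
  assumes "fin_graph V E" "card V \<le> k"
  shows "\<exists>c. proper_coloring V E k c"
proof -
  obtain h where h: "bij_betw h V {0..<card V}"
    using ex_bij_betw_finite_nat assms(1) unfolding fin_graph_def by blast
  have "h v < k" if "v \<in> V" for v using bij_betw_apply[OF h that] assms(2) by simp
  moreover have "h u \<noteq> h v" if "E u v" for u v
    using that h assms(1) unfolding fin_graph_def bij_betw_def inj_on_def by metis
  ultimately show ?thesis unfolding proper_coloring_def by blast
qed

lemma circ_hom_if_proper_coloring:
  assumes "fin_graph V E" "proper_coloring V E k c"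
  shows "circ_hom V E k 1 c"
  unfolding circ_hom_def
proof (intro conjI ballI allI impI)
  show "c v < k" if "v \<in> V" for v using assms(2) that unfolding proper_coloring_def by blast
  fix u v assume "E u v"
  then have "c u < k" "c v < k" "c u \<noteq> c v"
    using assms unfolding fin_graph_def proper_coloring_def by blast+
  then show "int 1 \<le> \<bar>int (c u) - int (c v)\<bar>" "\<bar>int (c u) - int (c v)\<bar> \<le> int k - int 1" by auto
qed

lemma chromatic_number_proper_coloring:
  assumes "fin_graph V E"
  shows "\<exists>c. proper_coloring V E (chromatic_number V E) c"
  unfolding chromatic_number_def using proper_coloring_if_card_le[OF assms order_refl] by (rule LeastI)

lemma two_le_chromatic_number:
  assumes "fin_graph V E" "E u v"
  shows "2 \<le> chromatic_number V E"
proof -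
  obtain c where c: "proper_coloring V E (chromatic_number V E) c"
    using chromatic_number_proper_coloring[OF assms(1)] by blast
  have "u \<in> V" "v \<in> V" using assms unfolding fin_graph_def by auto
  then have "c u < chromatic_number V E" "c v < chromatic_number V E" "c u \<noteq> c v"
    using c assms(2) unfolding proper_coloring_def by auto
  then show ?thesis by linarith
qed

lemma double_less_if_coprime:
  fixes p q :: nat
  assumes "coprime p q" "2 * q \<le> p" "2 < p"
  shows "2 * q < p"
proof -
  have "2 * q = p \<Longrightarrow> q = 1" using coprime_common_divisor_nat[OF assms(1) _ dvd_refl] by auto
  then show ?thesis using assms(2,3) by fastforce
qed

text \<open>A homomorphism into \<open>K(p/q)\<close> with \<open>p > |V|\<close> misses a colour, so it can be reduced.\<close>
lemma circ_colourable_bounded: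
  assumes G: "fin_graph V E"
  shows "circ_colourable V E p q \<Longrightarrow> \<exists>p' q'. circ_colourable V E p' q' \<and> p' \<le> max (card V) 2
    \<and> real p' / real q' \<le> real p / real q"
proof (induction p arbitrary: q rule: less_induct)
  case (less p)
  show ?case
  proof (cases "p \<le> max (card V) 2")
    case True
    then show ?thesis using less.prems by blast
  next
    case False
    obtain f where q: "1 \<le> q" "2 * q \<le> p" and cop: "coprime p q" and f: "circ_hom V E p q f"
      using less.prems unfolding circ_colourable_def by blast
    have "2 * q < p" using double_less_if_coprime[OF cop q(2)] False by simp
    have "f ` V \<subseteq> {..<p}" using f unfolding circ_hom_def by auto
    moreover have "card (f ` V) < p"
      using card_image_le[of V f] G False unfolding fin_graph_def by fastforce
    then have "f ` V \<noteq> {..<p}" by auto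
    ultimately obtain c where "c < p" "c \<notin> f ` V" by auto
    then obtain p' q' where r: "circ_colourable V E p' q'" "p' < p" "real p' / real q' < real p / real q"
      using circ_hom_missing_colour_reduce[OF G f q(1) \<open>2 * q < p\<close> cop] by blast
    then show ?thesis using less.IH[OF r(2,1)] by fastforce
  qed
qed

lemma circular_chromatic_number_attained:
  assumes G: "fin_graph V E"
  shows "\<exists>p q. circ_colourable V E p q \<and> circular_chromatic_number V E = real p / real q"
proof -
  define B where "B = max (card V) 2"
  define Q where "Q = {real p / real q | p q. circ_colourable V E p q \<and> p \<le> B}"
  have "Q \<subseteq> (\<lambda>(p, q). real p / real q) ` ({..B} \<times> {..B})"
    unfolding Q_def circ_colourable_def by force
  then have "finite Q" by (rule finite_subset) auto
  obtain c where "proper_coloring V E B c"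
    using proper_coloring_if_card_le[OF G] unfolding B_def by fastforce
  then have "circ_colourable V E B 1"
    using circ_hom_if_proper_coloring[OF G] unfolding circ_colourable_def B_def by auto
  then have "real B / real 1 \<in> Q" unfolding Q_def by blast
  then have "Min Q \<in> Q" using \<open>finite Q\<close> by (intro Min_in) auto
  have "circular_chromatic_number V E = Min Q"
    unfolding circular_chromatic_number_eq_Inf
  proof (rule cInf_eq_minimum)
    show "Min Q \<in> {real n / real d | n d. circ_colourable V E n d}"
      using \<open>Min Q \<in> Q\<close> unfolding Q_def by blast
  next
    fix x assume "x \<in> {real n / real d | n d. circ_colourable V E n d}"
    then obtain p q where "x = real p / real q" "circ_colourable V E p q" by blast
    then obtain p' q' where "circ_colourable V E p' q'" "p' \<le> B" "real p' / real q' \<le> x"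
      using circ_colourable_bounded[OF G] unfolding B_def by blast
    moreover have "Min Q \<le> real p' / real q'"
      using calculation \<open>finite Q\<close> unfolding Q_def by (intro Min_le) blast+
    ultimately show "Min Q \<le> x" by linarith
  qed
  then show ?thesis using \<open>Min Q \<in> Q\<close> unfolding Q_def by auto
qed

lemma circ_colourable_at_circular_chromatic_number:
  assumes G: "fin_graph V E" and chi: "circular_chromatic_number V E = real n / real d"
    and cop: "coprime n d" and d: "0 < d"
  shows "circ_colourable V E n d"
proof -
  obtain p q where pq: "circ_colourable V E p q" "circular_chromatic_number V E = real p / real q"
    using circular_chromatic_number_attained[OF G] by blast
  then have "real n * real q = real p * real d"
    using chi d unfolding circ_colourable_def by (simp add: divide_simps)
  then have "n * q = p * d" by (metis of_nat_eq_iff of_nat_mult)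
  moreover have "coprime p q" using pq(1) unfolding circ_colourable_def by blast
  ultimately show ?thesis using coprime_crossproduct_nat[of n d p q] cop pq(1) by simp
qed

section \<open>Tight homomorphisms\<close>

lemma circ_hom_tight:
  assumes G: "fin_graph V E" and chi: "circular_chromatic_number V E = real n / real d"
    and f: "circ_hom V E n d f" and d: "1 \<le> d" "2 * d < n" and cop: "coprime n d" and i: "i < n"
  shows "\<exists>u v. E u v \<and> f u = i \<and> f v = (i + d) mod n"
proof (rule ccontr)
  assume not_tight: "\<not> ?thesis"
  define g where "g v = (if f v = i then (i + 1) mod n else f v)" for v
  have f_less: "f v < n" if "v \<in> V" for v using f that unfolding circ_hom_def by auto
  have "circ_hom V E n d g"
    unfolding circ_hom_iff_circ_adj
  proof (intro conjI ballI allI impI)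
    fix v assume "v \<in> V" then show "g v < n" using f_less i unfolding g_def by auto
  next
    have shift: "circ_adj n d ((i + 1) mod n) (f v)" if "E u v" "f u = i" for u v
    proof -
      have "v \<in> V" using G that(1) unfolding fin_graph_def by auto
      moreover have "circ_adj n d i (f v)" using f that unfolding circ_hom_iff_circ_adj by blast
      moreover have "f v \<noteq> (i + d) mod n" using not_tight that by blast
      ultimately show ?thesis using circ_adj_shift[of i n "f v" d] f_less i d by simp
    qed
    fix u v assume uv: "E u v"
    then have vu: "E v u" using G unfolding fin_graph_def by blast
    have adj: "circ_adj n d (f u) (f v)" using f uv unfolding circ_hom_iff_circ_adj by blast
    then have "f u \<noteq> f v" using circ_adj_imp_neq d by simp
    consider "f u = i" | "f v = i" | "f u \<noteq> i" "f v \<noteq> i" by blast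
    then show "circ_adj n d (g u) (g v)"
    proof cases
      case 1
      then show ?thesis using shift[OF uv] \<open>f u \<noteq> f v\<close> unfolding g_def by simp
    next
      case 2
      then show ?thesis using shift[OF vu] \<open>f u \<noteq> f v\<close> circ_adj_sym unfolding g_def by simp
    next
      case 3
      then show ?thesis using adj unfolding g_def by simp
    qed
  qed
  moreover have "i \<notin> g ` V"
  proof -
    have "(i + 1) mod n \<noteq> i"
    proof (cases "i + 1 < n")
      case False
      then have "i + 1 = n" using i by simp
      then show ?thesis using d by auto
    qed simp
    then show ?thesis unfolding g_def by auto
  qed
  ultimately obtain p q where "circ_colourable V E p q" "real p / real q < real n / real d"
    using circ_hom_missing_colour_reduce[OF G _ d cop i] by blast
  then show False using circular_chromatic_number_le chi by fastforce
qed

section \<open>Free windows of colours\<close>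

lemma maximal_independent_set_extends:
  assumes "finite V" "independent_set V E A"
  shows "\<exists>M. maximal_independent_set V E M \<and> A \<subseteq> M"
proof -
  define F where "F = {T. independent_set V E T \<and> A \<subseteq> T}"
  have "F \<subseteq> Pow V" unfolding F_def independent_set_def by auto
  then have "finite F" using assms(1) by (meson finite_Pow_iff finite_subset)
  moreover have "A \<in> F" using assms(2) unfolding F_def by simp
  ultimately obtain M where M: "M \<in> F" "\<And>T. T \<in> F \<Longrightarrow> M \<subseteq> T \<Longrightarrow> M = T"
    using finite_has_maximal[of F] by blast
  have "maximal_independent_set V E M"
    unfolding maximal_independent_set_def
  proof (intro conjI allI impI)
    show "independent_set V E M" using M(1) unfolding F_def by simp
    fix T assume "independent_set V E T \<and> M \<subseteq> T"
    then show "T = M" using M unfolding F_def by auto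
  qed
  then show ?thesis using M(1) unfolding F_def by blast
qed

lemma independent_set_insert:
  assumes "fin_graph V E" "independent_set V E S" "x \<in> V" "\<forall>w\<in>S. \<not> E x w"
  shows "independent_set V E (insert x S)"
proof -
  have "\<not> E x x" "\<forall>w\<in>S. \<not> E w x" using assms(1,4) unfolding fin_graph_def by blast+
  then show ?thesis using assms(2,3,4) unfolding independent_set_def by blast
qed

text \<open>Both ends of an edge can be added to \<open>S\<close>, but not together.\<close>
lemma free_independent_set_if_edge:
  assumes G: "fin_graph V E" and S: "independent_set V E S" and uv: "E u v"
    and "\<forall>w\<in>S. \<not> E u w" "\<forall>w\<in>S. \<not> E v w"
  shows "free_independent_set V E S"
proof -
  have V: "u \<in> V" "v \<in> V" "finite V" using G uv unfolding fin_graph_def by auto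
  obtain M1 where M1: "maximal_independent_set V E M1" "insert u S \<subseteq> M1"
    using maximal_independent_set_extends[OF V(3) independent_set_insert[OF G S V(1)]] assms by blast
  obtain M2 where M2: "maximal_independent_set V E M2" "insert v S \<subseteq> M2"
    using maximal_independent_set_extends[OF V(3) independent_set_insert[OF G S V(2)]] assms by blast
  have "M1 \<noteq> M2"
  proof
    assume "M1 = M2"
    then have "u \<in> M1" "v \<in> M1" using M1 M2 by auto
    then show False using M1(1) uv unfolding maximal_independent_set_def independent_set_def by blast
  qed
  then show ?thesis unfolding free_independent_set_def using S M1 M2 by blast
qed

lemma circ_window_free:
  assumes G: "fin_graph V E" and f: "circ_hom V E n d f" and d: "2 \<le> d" "2 * d < n"
    and tight: "\<And>i. i < n \<Longrightarrow> \<exists>u v. E u v \<and> f u = i \<and> f v = (i + d) mod n" and a: "a < n"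
  shows "free_independent_set V E {w\<in>V. a \<le> f w \<and> f w < a + (d - 1)}"
proof -
  define S where "S = {w\<in>V. a \<le> f w \<and> f w < a + (d - 1)}"
  define i where "i = (a + n - 1) mod n"
  have f_less: "f w < n" if "w \<in> V" for w using f that unfolding circ_hom_def by auto
  obtain u v where uv: "E u v" "f u = i" "f v = (i + d) mod n"
    using tight[of i] a unfolding i_def by auto
  have int_i: "int i = (int a - 1) mod int n"
  proof -
    have "int (a + n - 1) = (int a - 1) + int n" using a by simp
    then show ?thesis unfolding i_def by (simp add: of_nat_mod)
  qed
  have int_fv: "int (f v) = (int a - 1 + int d) mod int n"
    using uv(3) int_i by (simp add: of_nat_mod mod_add_left_eq)
  have from_u: "(int c - int i) mod int n = int c - int a + 1" if "a \<le> c" "c < a + (d - 1)" for c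
  proof -
    have "(int c - int i) mod int n = (int c - int a + 1) mod int n"
      unfolding int_i by (simp add: mod_diff_right_eq) (simp add: algebra_simps)
    also have "\<dots> = int c - int a + 1" using that d by (intro mod_pos_pos_trivial) auto
    finally show ?thesis .
  qed
  have to_v: "(int (f v) - int c) mod int n = int a - 1 + int d - int c" if "a \<le> c" "c < a + (d - 1)" for c
  proof -
    have "(int (f v) - int c) mod int n = (int a - 1 + int d - int c) mod int n"
      unfolding int_fv by (simp add: mod_diff_left_eq)
    also have "\<dots> = int a - 1 + int d - int c" using that d by (intro mod_pos_pos_trivial) auto
    finally show ?thesis .
  qed
  have "independent_set V E S"
    unfolding independent_set_def
  proof (intro conjI ballI)
    fix w1 w2 assume "w1 \<in> S" "w2 \<in> S"
    then have "\<bar>int (f w1) - int (f w2)\<bar> < int d" unfolding S_def using d by auto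
    then have "\<not> circ_adj n d (f w1) (f w2)" unfolding circ_adj_def by auto
    then show "\<not> E w1 w2" using f unfolding circ_hom_iff_circ_adj by blast
  qed (auto simp: S_def)
  moreover have "\<not> E u w" if "w \<in> S" for w
  proof
    assume "E u w"
    then have "circ_adj n d (f w) i" using f uv(2) circ_adj_sym unfolding circ_hom_iff_circ_adj by blast
    moreover have w: "f w < n" "i < n" "a \<le> f w" "f w < a + (d - 1)"
      using that f_less a unfolding S_def i_def by auto
    ultimately have "int d \<le> int (f w) - int a + 1"
      using from_u[of "f w"] circ_adj_iff_mod[of "f w" n i d] by simp
    then show False using w d by linarith
  qed
  moreover have "\<not> E v w" if "w \<in> S" for w
  proof
    assume "E v w"
    then have "circ_adj n d (f v) (f w)" using f unfolding circ_hom_iff_circ_adj by blast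
    moreover have w: "f w < n" "f v < n" "a \<le> f w" "f w < a + (d - 1)"
      using that f_less a G uv(1) unfolding S_def fin_graph_def by auto
    ultimately have "int d \<le> int a - 1 + int d - int (f w)"
      using to_v[of "f w"] circ_adj_iff_mod[of "f v" n "f w" d] by simp
    then show False using w by linarith
  qed
  ultimately have "free_independent_set V E S" using free_independent_set_if_edge[OF G _ uv(1)] by blast
  then show ?thesis unfolding S_def .
qed

lemma free_chromatic_number_le_windows:
  fixes f :: "'a \<Rightarrow> nat"
  assumes V: "finite V" "V \<noteq> {}" and f: "\<forall>v\<in>V. f v < n" and k: "0 < k"
    and free: "\<And>a. a < n \<Longrightarrow> free_independent_set V E {w\<in>V. a \<le> f w \<and> f w < a + k}"
  shows "free_chromatic_number V E \<le> enat (nat \<lceil>real n / real k\<rceil>)"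
proof -
  define block where "block j = {w\<in>V. f w div k = j}" for j
  define P where "P = block ` (\<lambda>v. f v div k) ` V"
  have "partition_on V P"
    by (rule partition_onI) (auto simp: P_def block_def disjnt_def)
  moreover have "finite P" "0 < card P" using V unfolding P_def by (auto simp: card_gt_0_iff)
  moreover have "free_independent_set V E S" if "S \<in> P" for S
  proof -
    obtain v where v: "v \<in> V" "S = block (f v div k)" using \<open>S \<in> P\<close> unfolding P_def by blast
    have "block (f v div k) = {w\<in>V. f v div k * k \<le> f w \<and> f w < f v div k * k + k}"
      unfolding block_def using k by (metis (no_types, lifting) add.commute div_nat_eqI
          div_times_less_eq_dividend dividend_less_div_times mult.commute mult_Suc_right)
    moreover have "f v div k * k < n" using f v(1) div_times_less_eq_dividend[of "f v" k] by (meson le_less_trans)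
    ultimately show ?thesis using free v(2) by simp
  qed
  ultimately have "free_chromatic_number V E \<le> enat (card P)"
    unfolding free_chromatic_number_def by (intro Inf_lower) blast
  also have "card P \<le> nat \<lceil>real n / real k\<rceil>"
  proof -
    have "n \<le> nat \<lceil>real n / real k\<rceil> * k"
    proof -
      have "real n / real k \<le> real (nat \<lceil>real n / real k\<rceil>)" by linarith
      then have "real n \<le> real (nat \<lceil>real n / real k\<rceil>) * real k" using k by (simp only: pos_divide_le_eq of_nat_0_less_iff)
      then show ?thesis by (metis of_nat_le_iff of_nat_mult)
    qed
    then have "(\<lambda>v. f v div k) ` V \<subseteq> {..<nat \<lceil>real n / real k\<rceil>}"
      using f k by (auto simp: div_less_iff_less_mult)
    then have "card ((\<lambda>v. f v div k) ` V) \<le> nat \<lceil>real n / real k\<rceil>"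
      using card_mono[of "{..<nat \<lceil>real n / real k\<rceil>}"] by fastforce
    then show ?thesis unfolding P_def using V(1) card_image_le[of _ block] by (meson finite_imageI order_trans)
  qed
  finally show ?thesis by simp
qed

lemma ceiling_div_pred_le:
  fixes n d k :: nat
  assumes "n < d * k" "2 \<le> d"
  shows "\<lceil>real n / real (d - 1)\<rceil> \<le> 2 * int k - 1"
proof -
  have "1 \<le> k" using assms(1) by (cases k) auto
  then have "0 \<le> (int k - 1) * (int d - 2)" using assms(2) by simp
  moreover have "int n < int d * int k" using assms(1) by (metis of_nat_less_iff of_nat_mult)
  moreover have "(2 * int k - 1) * (int d - 1) = int d * int k - 1 + (int k - 1) * (int d - 2)"
    by (simp add: algebra_simps)
  ultimately have "int n \<le> (2 * int k - 1) * (int d - 1)" by linarith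
  also have "int d - 1 = int (d - 1)" using assms(2) by simp
  finally have "int n \<le> (2 * int k - 1) * int (d - 1)" .
  then have "real_of_int (int n) \<le> real_of_int ((2 * int k - 1) * int (d - 1))"
    by (simp only: of_int_le_iff)
  then have "real n / real (d - 1) \<le> real_of_int (2 * int k - 1)"
    using assms(2) by (simp add: pos_divide_le_eq)
  then show ?thesis by (rule ceiling_le)
qed

lemma free_chromatic_number_le_tight:
  assumes G: "fin_graph V E" and f: "circ_hom V E n d f" and d: "2 \<le> d" "2 * d < n"
    and tight: "\<And>i. i < n \<Longrightarrow> \<exists>u v. E u v \<and> f u = i \<and> f v = (i + d) mod n"
  shows "free_chromatic_number V E \<le> enat (nat \<lceil>real n / real (d - 1)\<rceil>)"
proof (rule free_chromatic_number_le_windows)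
  show "finite V" using G unfolding fin_graph_def by simp
  show "V \<noteq> {}" using tight[of 0] G d unfolding fin_graph_def by auto
  show "\<forall>v\<in>V. f v < n" using f unfolding circ_hom_def by simp
  show "0 < d - 1" using d by simp
  show "free_independent_set V E {w\<in>V. a \<le> f w \<and> f w < a + (d - 1)}" if "a < n" for a
    using circ_window_free[OF G f d tight that] .
qed

lemma circular_chromatic_number_le_chromatic_number:
  assumes "fin_graph V E" "E u v"
  shows "circular_chromatic_number V E \<le> real (chromatic_number V E)"
proof -
  obtain c where "proper_coloring V E (chromatic_number V E) c"
    using chromatic_number_proper_coloring[OF assms(1)] by blast
  then have "circ_colourable V E (chromatic_number V E) 1"
    using circ_hom_if_proper_coloring[OF assms(1)] two_le_chromatic_number[OF assms]
    unfolding circ_colourable_def by auto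
  then show ?thesis using circular_chromatic_number_le by fastforce
qed

lemma less_mult_chromatic_number:
  assumes G: "fin_graph V E" and chi: "circular_chromatic_number V E = real n / real d"
    and cop: "coprime n d" and d: "2 \<le> d" and uv: "E u v"
  shows "n < d * chromatic_number V E"
proof -
  have "real n / real d \<le> real (chromatic_number V E)"
    using circular_chromatic_number_le_chromatic_number[OF G uv] chi by simp
  then have "n \<le> d * chromatic_number V E"
    using d by (simp add: pos_divide_le_eq) (metis of_nat_le_iff of_nat_mult mult.commute)
  moreover have "\<not> d dvd n" using coprime_common_divisor_nat[OF cop _ dvd_refl] d by fastforce
  ultimately show ?thesis by (metis dvd_triv_left le_neq_implies_less)
qed

theorem mainTheorem2:
  fixes V :: "'a set" and E :: "'a \<Rightarrow> 'a \<Rightarrow> bool" and n d :: nat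
  assumes "fin_graph V E"
    and "circular_chromatic_number V E = real n / real d"
    and "coprime n d"
    and "d \<ge> 2"
  shows "free_chromatic_number V E
           \<le> enat (nat \<lceil>circular_chromatic_number V E * (1 + 1 / (real d - 1))\<rceil>)
       \<and> \<lceil>circular_chromatic_number V E * (1 + 1 / (real d - 1))\<rceil>
           \<le> 2 * int (chromatic_number V E) - 1"
proof -
  obtain f where f: "circ_hom V E n d f" and "2 * d \<le> n"
    using circ_colourable_at_circular_chromatic_number[OF assms(1-3)] assms(4)
    unfolding circ_colourable_def by auto
  then have "2 * d < n" using double_less_if_coprime[OF assms(3)] assms(4) by simp
  have tight: "\<exists>u v. E u v \<and> f u = i \<and> f v = (i + d) mod n" if "i < n" for i
    using circ_hom_tight[OF assms(1,2) f _ \<open>2 * d < n\<close> assms(3) that] assms(4) by simp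
  then obtain u v where "E u v" using \<open>2 * d < n\<close> by blast
  have "circular_chromatic_number V E * (1 + 1 / (real d - 1)) = real n / real (d - 1)"
    using assms(2,4) by (simp add: field_simps of_nat_diff)
  moreover have "free_chromatic_number V E \<le> enat (nat \<lceil>real n / real (d - 1)\<rceil>)"
    using free_chromatic_number_le_tight[OF assms(1) f assms(4) \<open>2 * d < n\<close> tight] .
  moreover have "n < d * chromatic_number V E"
    using less_mult_chromatic_number[OF assms \<open>E u v\<close>] .
  ultimately show ?thesis using ceiling_div_pred_le assms(4) by simp
qed

end
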